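(* HyperLTL and LTL under synchronous team semantics are of incomparable expressiveness (there is a HyperLTL sentence not equivalent to any LTL formula under $\models_s$, and an LTL formula under $\models_s$ not equivalent to any HyperLTL sentence), and HyperLTL is strictly more expressive than LTL under asynchronous team semantics (every LTL formula under $\models_a$ is equivalent to some HyperLTL sentence, but some HyperLTL sentence is equivalent to no LTL formula under $\models_a$). Here a HyperLTL sentence $\phi$ and an LTL formula $\varphi$ are equivalent under $\models_\star$ if $T\models\phi\iff T\models_\star\varphi$ for every team $T$.
   Context: Fix a finite set $AP$. Traces are elements of $(2^{AP})^\omega$, $t[i,\infty)=t(i)t(i+1)\cdots$; teams are sets of traces, $T[i,\infty)=\{t[i,\infty):t\in T\}$, $T[k]=\{t[k(t),\infty):t\in T\}$ for $k:T\to\mathbb N$. LTL formulas: $\varphi::=p\mid\neg p\mid\varphi\wedge\varphi\mid\varphi\vee\varphi\mid X\varphi\mid F\varphi\mid G\varphi\mid\varphi U\varphi\mid\varphi R\varphi$. Team semantics $\models_\star$, $\star\in\{a,s\}$: $T\models_\star p$ iff $p\in t(0)$ for all $t\in T$; $T\models_\star\neg p$ iff $p\notin t(0)$ for all $t\in T$; $\wedge$ conjunctive; $T\models_\star\psi\vee\varphi$ iff $T=T_1\cup T_2$ with $T_1\models_\star\psi$, $T_2\models_\star\varphi$; $T\models_\star X\varphi$ iff $T[1,\infty)\models_\star\varphi$. Synchronous: $T\models_s F\varphi$ iff $\exists k$: $T[k,\infty)\models_s\varphi$; $G$: $\forall k$; $T\models_s\psi U\varphi$ iff $\exists k$: $T[k,\infty)\models_s\varphi$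 and $\forall k'<k$: $T[k',\infty)\models_s\psi$; $T\models_s\psi R\varphi$ iff $\forall k$: $T[k,\infty)\models_s\varphi$ or $\exists k'<k$: $T[k',\infty)\models_s\psi$. Asynchronous: $T\models_a F\varphi$ iff $\exists k:T\to\mathbb N$ with $T[k]\models_a\varphi$; $T\models_a G\varphi$ iff $T[k]\models_a\varphi$ for all $k$; $T\models_a\psi U\varphi$ iff there is $k$ with $T[k]\models_a\varphi$ such that for $T_>=\{t:k(t)>0\}$ and all $k':T_>\to\mathbb N$, $k'<k$ pointwise, $\{t[k'(t),\infty):t\in T_>\}\models_a\psi$; $T\models_a\psi R\varphi$ iff for every $k:T\to\mathbb N$ there are $T_1\cup T_2=T$ with $\{t[k(t),\infty):t\in T_1\}\models_a\varphi$ and some $k':T_2\to\mathbb N$, $k'<k$ pointwise, with $\{t[k'(t),\infty):t\in T_2\}\models_a\psi$. HyperLTL: formulas $\phi::=\exists\pi.\phi\mid\forall\pi.\phi\mid\psi$, $\psi::=p_\pi\mid\neg\psi\mid\psi\vee\psi\mid X\psi\mid\psi U\psi$; sentences have no free trace variables. For a team $T$ and partial assignment $\Pi$ of trace variables to traces ($\Pi^i$ maps $\pi$ to $\Pi(\pi)[i,\infty)$): $(T,\Pi)\models p_\pi$ iff $p\in\Pi(\pi)(0)$; $\neg,\vee$ classical; $(T,\Pi)\models X\psi$ iff $(T,\Pi^1)\models\psi$; $(T,\Pi)\models\psi_1U\psi_2$ iff $\exists k$: $(T,\Pi^k)\models\psi_2$ and $\forall k'<k$: $(T,\Pi^{k'})\models\psi_1$;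 $(T,\Pi)\models\exists\pi.\psi$ iff for some $t\in T$, $(T,\Pi[\pi\mapsto t])\models\psi$; $\forall$ dually; $T\models\phi$ iff $(T,\Pi_\emptyset)\models\phi$. *)

theory Defs
  imports Main
begin

(* Atomic propositions: a finite type 'a (types are nonempty, so AP is nonempty). *)
type_synonym 'a trace = "nat \<Rightarrow> 'a set"
type_synonym 'a team = "'a trace set"

definition suffix :: "nat \<Rightarrow> 'a trace \<Rightarrow> 'a trace" where
  "suffix i t = (\<lambda>n. t (n + i))"

definition tshift :: "nat \<Rightarrow> 'a team \<Rightarrow> 'a team" where
  "tshift i T = suffix i ` T"

definition tshiftf :: "('a trace \<Rightarrow> nat) \<Rightarrow> 'a team \<Rightarrow> 'a team" where
  "tshiftf k T = (\<lambda>t. suffix (k t) t) ` T"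

datatype 'a ltl =
    Prop 'a | NProp 'a
  | And "'a ltl" "'a ltl" | Or "'a ltl" "'a ltl"
  | Next "'a ltl" | Fin "'a ltl" | Glob "'a ltl"
  | Until "'a ltl" "'a ltl" | Release "'a ltl" "'a ltl"

fun sat_s :: "'a team \<Rightarrow> 'a ltl \<Rightarrow> bool" where
  "sat_s T (Prop p) = (\<forall>t\<in>T. p \<in> t 0)"
| "sat_s T (NProp p) = (\<forall>t\<in>T. p \<notin> t 0)"
| "sat_s T (And a b) = (sat_s T a \<and> sat_s T b)"
| "sat_s T (Or a b) = (\<exists>T1 T2. T = T1 \<union> T2 \<and> sat_s T1 a \<and> sat_s T2 b)"
| "sat_s T (Next a) = sat_s (tshift 1 T) a"
| "sat_s T (Fin a) = (\<exists>k. sat_s (tshift k T) a)"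
| "sat_s T (Glob a) = (\<forall>k. sat_s (tshift k T) a)"
| "sat_s T (Until a b) = (\<exists>k. sat_s (tshift k T) b \<and> (\<forall>k'<k. sat_s (tshift k' T) a))"
| "sat_s T (Release a b) = (\<forall>k. sat_s (tshift k T) b \<or> (\<exists>k'<k. sat_s (tshift k' T) a))"

fun sat_a :: "'a team \<Rightarrow> 'a ltl \<Rightarrow> bool" where
  "sat_a T (Prop p) = (\<forall>t\<in>T. p \<in> t 0)"
| "sat_a T (NProp p) = (\<forall>t\<in>T. p \<notin> t 0)"
| "sat_a T (And a b) = (sat_a T a \<and> sat_a T b)"
| "sat_a T (Or a b) = (\<exists>T1 T2. T = T1 \<union> T2 \<and> sat_a T1 a \<and> sat_a T2 b)"
| "sat_a T (Next a) = sat_a (tshift 1 T) a"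
| "sat_a T (Fin a) = (\<exists>k. sat_a (tshiftf k T) a)"
| "sat_a T (Glob a) = (\<forall>k. sat_a (tshiftf k T) a)"
| "sat_a T (Until a b) =
     (\<exists>k. sat_a (tshiftf k T) b \<and>
        (\<forall>k'. (\<forall>t\<in>{t\<in>T. k t > 0}. k' t < k t) \<longrightarrow>
              sat_a (tshiftf k' {t\<in>T. k t > 0}) a))"
| "sat_a T (Release a b) =
     (\<forall>k. \<exists>T1 T2. T1 \<union> T2 = T \<and> sat_a (tshiftf k T1) b \<and>
        (\<exists>k'. (\<forall>t\<in>T2. k' t < k t) \<and> sat_a (tshiftf k' T2) a))"

type_synonym tvar = nat

datatype 'a hbody =
    HProp 'a tvar | HNot "'a hbody" | HOr "'a hbody" "'a hbody"
  | HNext "'a hbody" | HUntil "'a hbody" "'a hbody"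

datatype 'a hyper =
    HEx tvar "'a hyper" | HAll tvar "'a hyper" | HBody "'a hbody"

type_synonym 'a assign = "tvar \<Rightarrow> 'a trace option"

definition ashift :: "nat \<Rightarrow> 'a assign \<Rightarrow> 'a assign" where
  "ashift i \<Pi> = (\<lambda>\<pi>. map_option (suffix i) (\<Pi> \<pi>))"

fun hbsat :: "'a assign \<Rightarrow> 'a hbody \<Rightarrow> bool" where
  "hbsat \<Pi> (HProp p \<pi>) = (case \<Pi> \<pi> of Some t \<Rightarrow> p \<in> t 0 | None \<Rightarrow> False)"
| "hbsat \<Pi> (HNot a) = (\<not> hbsat \<Pi> a)"
| "hbsat \<Pi> (HOr a b) = (hbsat \<Pi> a \<or> hbsat \<Pi> b)"
| "hbsat \<Pi> (HNext a) = hbsat (ashift 1 \<Pi>) a"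
| "hbsat \<Pi> (HUntil a b) = (\<exists>k. hbsat (ashift k \<Pi>) b \<and> (\<forall>k'<k. hbsat (ashift k' \<Pi>) a))"

fun hsat :: "'a team \<Rightarrow> 'a assign \<Rightarrow> 'a hyper \<Rightarrow> bool" where
  "hsat T \<Pi> (HEx \<pi> f) = (\<exists>t\<in>T. hsat T (\<Pi>(\<pi> := Some t)) f)"
| "hsat T \<Pi> (HAll \<pi> f) = (\<forall>t\<in>T. hsat T (\<Pi>(\<pi> := Some t)) f)"
| "hsat T \<Pi> (HBody b) = hbsat \<Pi> b"

fun hbfree :: "'a hbody \<Rightarrow> tvar set" where
  "hbfree (HProp p \<pi>) = {\<pi>}"
| "hbfree (HNot a) = hbfree a"
| "hbfree (HOr a b) = hbfree a \<union> hbfree b"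
| "hbfree (HNext a) = hbfree a"
| "hbfree (HUntil a b) = hbfree a \<union> hbfree b"

fun hfree :: "'a hyper \<Rightarrow> tvar set" where
  "hfree (HEx \<pi> f) = hfree f - {\<pi>}"
| "hfree (HAll \<pi> f) = hfree f - {\<pi>}"
| "hfree (HBody b) = hbfree b"

definition sentence :: "'a hyper \<Rightarrow> bool" where
  "sentence f \<longleftrightarrow> hfree f = {}"

definition hmodels :: "'a team \<Rightarrow> 'a hyper \<Rightarrow> bool" where
  "hmodels T f = hsat T (\<lambda>_. None) f"

definition equiv_s :: "'a hyper \<Rightarrow> 'a ltl \<Rightarrow> bool" where
  "equiv_s f g \<longleftrightarrow> (\<forall>T. hmodels T f \<longleftrightarrow> sat_s T g)"

definition equiv_a :: "'a hyper \<Rightarrow> 'a ltl \<Rightarrow> bool" where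
  "equiv_a f g \<longleftrightarrow> (\<forall>T. hmodels T f \<longleftrightarrow> sat_a T g)"

end

theory Submission
  imports Defs
begin

text \<open>
  Under asynchronous semantics every LTL formula is flat: since the shifts may differ from trace
  to trace, a team satisfies it iff every single trace does, so it is expressed by the sentence
  \<open>\<forall>\<pi>. \<phi>(\<pi>)\<close>. Both team semantics satisfy every formula on the empty team, whereas
  \<open>\<exists>\<pi>. p(\<pi>)\<close> fails there.

  The substantial part is that synchronous \<open>F q\<close>, which asks for one position at which all traces
  carry \<open>q\<close>, is not definable in HyperLTL. The time axis is cut into blocks, and the trace indexed
  by \<open>(l, c)\<close> carries \<open>q\<close> everywhere except at the positions of block \<open>c\<close> spelling the letter
  \<open>l\<close>. If all indices are present, every position is \<open>q\<close>-free on some trace and \<open>F q\<close> fails;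
  dropping one index \<open>(gap, 0)\<close> creates a position where all traces carry \<open>q\<close>. A sentence with
  fewer than \<open>gap\<close> variables and temporal depth \<open>d\<close> only sees, for each assignment, the word of
  sets of variables whose trace lacks \<open>q\<close>. If block \<open>0\<close> is spelt by a Zimin-like word
  \<open>Z(m+1) = (Z(m) c(m))^e Z(m)\<close> with \<open>e > d\<close>, dropping the index deletes from that word a letter which,
  by pigeonhole, equals an earlier one, and such deletions are invisible at depth \<open>d\<close> because
  \<open>u^k\<close> and \<open>u^(k+1)\<close> agree on all formulas of depth below \<open>k\<close>. Closing the gap in the index set
  then maps the punctured team onto the full one.
\<close>

section \<open>Words of trace-variable sets and pumping\<close>

lemma suffix_0 [simp]: "suffix 0 t = t"
  by (simp add: suffix_def)

lemma suffix_suffix [simp]: "suffix i (suffix j t) = suffix (i + j) t"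
  by (simp add: suffix_def ac_simps)

lemma suffix_apply: "suffix i t k = t (k + i)"
  by (simp add: suffix_def)

text \<open>
  A word abstracts an assignment of traces over the single proposition \<open>q\<close>: its letter at a
  position is the set of trace variables whose trace lacks \<open>q\<close> there.
\<close>

type_synonym word = "nat \<Rightarrow> tvar set"

fun wsat :: "'a \<Rightarrow> word \<Rightarrow> 'a hbody \<Rightarrow> bool" where
  "wsat q w (HProp p \<pi>) \<longleftrightarrow> p = q \<and> \<pi> \<notin> w 0"
| "wsat q w (HNot a) \<longleftrightarrow> \<not> wsat q w a"
| "wsat q w (HOr a b) \<longleftrightarrow> wsat q w a \<or> wsat q w b"
| "wsat q w (HNext a) \<longleftrightarrow> wsat q (suffix 1 w) a"
| "wsat q w (HUntil a b) \<longleftrightarrow> (\<exists>k. wsat q (suffix k w) b \<and> (\<forall>j<k. wsat q (suffix j w) a))"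

fun temporal_depth :: "'a hbody \<Rightarrow> nat" where
  "temporal_depth (HProp p \<pi>) = 0"
| "temporal_depth (HNot a) = temporal_depth a"
| "temporal_depth (HOr a b) = max (temporal_depth a) (temporal_depth b)"
| "temporal_depth (HNext a) = Suc (temporal_depth a)"
| "temporal_depth (HUntil a b) = Suc (max (temporal_depth a) (temporal_depth b))"

definition conc :: "tvar set list \<Rightarrow> word \<Rightarrow> word" where
  "conc u w = (\<lambda>k. if k < length u then u ! k else w (k - length u))"

definition list_pow :: "'b list \<Rightarrow> nat \<Rightarrow> 'b list" where
  "list_pow u n = concat (replicate n u)"

lemma conc_Nil [simp]: "conc [] w = w"
  by (simp add: conc_def)

lemma conc_append: "conc (u @ v) w = conc u (conc v w)"
  by (auto simp: conc_def nth_append fun_eq_iff)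

lemma conc_Cons_0 [simp]: "conc (x # u) w 0 = x"
  by (simp add: conc_def)

lemma suffix_conc: "k \<le> length u \<Longrightarrow> suffix k (conc u w) = conc (drop k u) w"
  by (auto simp: conc_def fun_eq_iff suffix_apply add.commute)

lemma suffix_conc_length: "suffix (length u + k) (conc u w) = suffix k w"
  by (auto simp: conc_def fun_eq_iff suffix_apply)

lemma conc_map_suffix: "conc (map w [0..<n]) (suffix n w) = w"
  by (simp add: conc_def fun_eq_iff suffix_apply)

lemma suffix_1_conc_Cons [simp]: "suffix (Suc 0) (conc (x # u) w) = conc u w"
  using suffix_conc[of 1 "x # u" w] by simp

lemma list_pow_0 [simp]: "list_pow u 0 = []"
  by (simp add: list_pow_def)

lemma list_pow_Suc: "list_pow u (Suc n) = u @ list_pow u n"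
  by (simp add: list_pow_def)

lemma list_pow_add: "list_pow u (m + n) = list_pow u m @ list_pow u n"
  by (simp add: list_pow_def replicate_add)

lemma length_list_pow [simp]: "length (list_pow u n) = n * length u"
  by (simp add: list_pow_def length_concat sum_list_replicate)

lemma map_list_pow: "map f (list_pow u n) = list_pow (map f u) n"
  by (simp add: list_pow_def map_concat)

lemma set_list_pow_subset: "set (list_pow u n) \<subseteq> set u"
  by (auto simp: list_pow_def)

lemma wsat_HUntil_unfold:
  "wsat q w (HUntil a b) \<longleftrightarrow> wsat q w b \<or> (wsat q w a \<and> wsat q (suffix 1 w) (HUntil a b))"
proof
  assume "wsat q w (HUntil a b)"
  then obtain k where k: "wsat q (suffix k w) b" "\<forall>j<k. wsat q (suffix j w) a"
    by auto
  then show "wsat q w b \<or> (wsat q w a \<and> wsat q (suffix 1 w) (HUntil a b))"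
    by (cases k) (auto simp: add.commute intro!: exI[of _ "k - 1"])
next
  assume "wsat q w b \<or> (wsat q w a \<and> wsat q (suffix 1 w) (HUntil a b))"
  then show "wsat q w (HUntil a b)"
  proof
    assume "wsat q w b"
    then show ?thesis
      by (auto intro!: exI[of _ 0])
  next
    assume a: "wsat q w a \<and> wsat q (suffix 1 w) (HUntil a b)"
    then obtain k where "wsat q (suffix (k + 1) w) b" "\<forall>j<k. wsat q (suffix (j + 1) w) a"
      by auto
    with a show ?thesis
      by (auto simp: less_Suc_eq_0_disj intro!: exI[of _ "Suc k"])
  qed
qed

definition depth_equiv :: "'a \<Rightarrow> nat \<Rightarrow> word \<Rightarrow> word \<Rightarrow> bool" where
  "depth_equiv q d w w' \<longleftrightarrow>
     (\<forall>\<phi>::'a hbody. temporal_depth \<phi> \<le> d \<longrightarrow> (wsat q w \<phi> \<longleftrightarrow> wsat q w' \<phi>))"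

lemma depth_equiv_conc:
  assumes "depth_equiv q d w w'"
  shows "depth_equiv q d (conc u w) (conc u w')"
  unfolding depth_equiv_def
proof (intro allI impI)
  have equiv: "wsat q w \<psi> \<longleftrightarrow> wsat q w' \<psi>" if "temporal_depth \<psi> \<le> d" for \<psi> :: "'a hbody"
    using assms that by (simp add: depth_equiv_def)
  fix \<phi> :: "'a hbody"
  assume "temporal_depth \<phi> \<le> d"
  then show "wsat q (conc u w) \<phi> \<longleftrightarrow> wsat q (conc u w') \<phi>"
  proof (induction \<phi> arbitrary: u)
    case (HProp p \<pi>)
    then show ?case
      using equiv[OF HProp.prems] by (cases u) auto
  next
    case (HNext a)
    then show ?case
      using equiv[OF HNext.prems] by (cases u) auto
  next
    case (HUntil a b)
    show ?case
    proof (induction u)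
      case Nil
      then show ?case
        using equiv[OF HUntil.prems] by simp
    next
      case (Cons x u)
      with HUntil show ?case
        by (subst (1 2) wsat_HUntil_unfold) simp
    qed
  qed simp_all
qed

lemma depth_equiv_refl: "depth_equiv q d w w"
  by (simp add: depth_equiv_def)

lemma depth_equiv_trans [trans]: "depth_equiv q d w w' \<Longrightarrow> depth_equiv q d w' w'' \<Longrightarrow> depth_equiv q d w w''"
  by (simp add: depth_equiv_def)

text \<open>
  Two words that agree below position \<open>l\<close> and from position \<open>l - s\<close> on differ by \<open>s\<close> inserted
  letters; an until-witness beyond \<open>l\<close> is moved by \<open>s\<close> in the appropriate direction.
\<close>

lemma until_transfer_shift:
  fixes A B A' B' :: "nat \<Rightarrow> bool"
  assumes "s \<le> l"
    and prefix: "\<And>i. i < l \<Longrightarrow> A i = A' i \<and> B i = B' i"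
    and shift: "\<And>i. l \<le> i + s \<Longrightarrow> A i = A' (i + s) \<and> B i = B' (i + s)"
  shows "(\<exists>k. B k \<and> (\<forall>j<k. A j)) \<longleftrightarrow> (\<exists>k. B' k \<and> (\<forall>j<k. A' j))"
proof
  assume "\<exists>k. B k \<and> (\<forall>j<k. A j)"
  then obtain k where k: "B k" "\<forall>j<k. A j"
    by blast
  show "\<exists>k. B' k \<and> (\<forall>j<k. A' j)"
  proof (cases "k < l")
    case True
    with k prefix show ?thesis
      by auto
  next
    case False
    have "A' j" if "j < k + s" for j
    proof (cases "j < l")
      case True
      with k prefix \<open>\<not> k < l\<close> show ?thesis
        by auto
    next
      case False
      with k that shift[of "j - s"] \<open>s \<le> l\<close> show ?thesis
        by auto
    qed
    with k False shift show ?thesis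
      by auto
  qed
next
  assume "\<exists>k. B' k \<and> (\<forall>j<k. A' j)"
  then obtain k where k: "B' k" "\<forall>j<k. A' j"
    by blast
  show "\<exists>k. B k \<and> (\<forall>j<k. A j)"
  proof (cases "k < l")
    case True
    then have "B k" "\<forall>j<k. A j"
      using k prefix by auto
    then show ?thesis
      by blast
  next
    case False
    have "A j" if "j < k - s" for j
      using k that prefix[of j] shift[of j] by (cases "j < l") auto
    with k False shift[of "k - s"] \<open>s \<le> l\<close> show ?thesis
      by auto
  qed
qed

lemma suffix_conc_conc_shift:
  assumes "length v \<le> i"
  shows "suffix (i + length u) (conc v (conc u w)) = suffix i (conc v w)"
proof -
  obtain t where i: "i = length v + t"
    using assms le_Suc_ex by blast
  have "suffix (length v + (length u + t)) (conc v (conc u w)) = suffix (length u + t) (conc u w)"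
    by (rule suffix_conc_length)
  also have "\<dots> = suffix (length v + t) (conc v w)"
    by (simp only: suffix_conc_length)
  finally show ?thesis
    by (simp add: i ac_simps)
qed

lemma wsat_list_pow_Suc:
  assumes "u \<noteq> []" and "temporal_depth \<phi> < n"
  shows "wsat q (conc v (conc (list_pow u (Suc n)) w)) \<phi> \<longleftrightarrow> wsat q (conc v (conc (list_pow u n) w)) \<phi>"
  using assms(2)
proof (induction \<phi> arbitrary: v n)
  case (HProp p \<pi>)
  obtain m where "n = Suc m"
    using HProp.prems by (cases n) auto
  with \<open>u \<noteq> []\<close> show ?case
    by (cases v; cases u) (auto simp: list_pow_Suc)
next
  case (HNext a)
  show ?case
  proof (cases v)
    case Nil
    obtain m where n: "n = Suc m"
      using HNext.prems by (cases n) auto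
    obtain x u' where u: "u = x # u'"
      using \<open>u \<noteq> []\<close> list.exhaust by blast
    show ?thesis
      using HNext.IH[where v=u' and n=m] HNext.prems
      by (simp add: Nil n u list_pow_Suc[of _ "Suc m"] list_pow_Suc[of _ m] conc_append)
  next
    case (Cons x v')
    with HNext show ?thesis
      by simp
  qed
next
  case (HUntil a b)
  obtain m where n: "n = Suc m"
    using HUntil.prems by (cases n) auto
  \<comment> \<open>Viewing the first copy of \<open>u\<close> as part of the prefix, the longer word is the shorter
      one with one copy of \<open>u\<close> inserted after the prefix.\<close>
  define x where "x = conc v (conc (list_pow u n) w)"
  define x' where "x' = conc v (conc (list_pow u (Suc n)) w)"
  have x: "x = conc (v @ u) (conc (list_pow u m) w)" and x': "x' = conc (v @ u) (conc (list_pow u n) w)"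
    by (simp_all add: x_def x'_def n list_pow_Suc conc_append)
  have "(\<exists>k. wsat q (suffix k x) b \<and> (\<forall>j<k. wsat q (suffix j x) a)) \<longleftrightarrow>
        (\<exists>k. wsat q (suffix k x') b \<and> (\<forall>j<k. wsat q (suffix j x') a))"
  proof (rule until_transfer_shift[where l = "length (v @ u)" and s = "length u"])
    fix i
    assume "i < length (v @ u)"
    then show "wsat q (suffix i x) a = wsat q (suffix i x') a \<and> wsat q (suffix i x) b = wsat q (suffix i x') b"
      using HUntil.IH[where v="drop i (v @ u)" and n=m] HUntil.prems by (simp add: x x' n suffix_conc)
  next
    fix i
    assume "length (v @ u) \<le> i + length u"
    then have "suffix (i + length u) x' = suffix i x"
      using suffix_conc_conc_shift[of v i u "conc (list_pow u n) w"]
      by (simp add: x_def x'_def list_pow_Suc[of _ n] conc_append)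
    then show "wsat q (suffix i x) a = wsat q (suffix (i + length u) x') a \<and>
        wsat q (suffix i x) b = wsat q (suffix (i + length u) x') b"
      by simp
  qed simp
  then show ?case
    by (simp add: x_def x'_def)
qed simp_all

lemma wsat_list_pow_eq:
  assumes "u \<noteq> []" and "temporal_depth \<phi> < n" and "temporal_depth \<phi> < n'"
  shows "wsat q (conc v (conc (list_pow u n) w)) \<phi> \<longleftrightarrow> wsat q (conc v (conc (list_pow u n') w)) \<phi>"
proof -
  define D where "D = Suc (temporal_depth \<phi>)"
  have D: "wsat q (conc v (conc (list_pow u (D + k)) w)) \<phi> \<longleftrightarrow> wsat q (conc v (conc (list_pow u D) w)) \<phi>" for k
    by (induction k) (simp_all add: D_def wsat_list_pow_Suc[OF assms(1)])
  show ?thesis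
    using D[of "n - D"] D[of "n' - D"] assms(2,3) by (simp add: D_def)
qed

definition ctx_equiv :: "'a \<Rightarrow> nat \<Rightarrow> tvar set list \<Rightarrow> tvar set list \<Rightarrow> bool" where
  "ctx_equiv q d u u' \<longleftrightarrow> (\<forall>w. depth_equiv q d (conc u w) (conc u' w))"

lemma ctx_equiv_refl: "ctx_equiv q d u u"
  by (simp add: ctx_equiv_def depth_equiv_refl)

lemma ctx_equiv_trans [trans]: "ctx_equiv q d u u' \<Longrightarrow> ctx_equiv q d u' u'' \<Longrightarrow> ctx_equiv q d u u''"
  unfolding ctx_equiv_def by (blast intro: depth_equiv_trans)

lemma ctx_equiv_append:
  assumes "ctx_equiv q d u u'" and "ctx_equiv q d v v'"
  shows "ctx_equiv q d (u @ v) (u' @ v')"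
  unfolding ctx_equiv_def conc_append
proof
  fix w
  have "depth_equiv q d (conc u (conc v w)) (conc u (conc v' w))"
    using assms(2) by (simp add: ctx_equiv_def depth_equiv_conc)
  also have "depth_equiv q d \<dots> (conc u' (conc v' w))"
    using assms(1) by (simp add: ctx_equiv_def)
  finally show "depth_equiv q d (conc u (conc v w)) (conc u' (conc v' w))" .
qed

lemma ctx_equiv_list_pow_cong: "ctx_equiv q d u u' \<Longrightarrow> ctx_equiv q d (list_pow u n) (list_pow u' n)"
  by (induction n) (simp_all add: ctx_equiv_refl ctx_equiv_append list_pow_Suc)

lemma ctx_equiv_list_pow:
  assumes "u \<noteq> []" and "d < n" and "d < n'"
  shows "ctx_equiv q d (list_pow u n) (list_pow u n')"
  unfolding ctx_equiv_def depth_equiv_def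
proof (intro allI impI)
  fix w and \<phi> :: "'a hbody"
  assume "temporal_depth \<phi> \<le> d"
  with assms(2,3) have "temporal_depth \<phi> < n" and "temporal_depth \<phi> < n'"
    by linarith+
  then show "wsat q (conc (list_pow u n) w) \<phi> \<longleftrightarrow> wsat q (conc (list_pow u n') w) \<phi>"
    using wsat_list_pow_eq[OF assms(1), where v = "[]"] by simp
qed

section \<open>Zimin-like words\<close>

fun zimin :: "nat \<Rightarrow> (nat \<Rightarrow> 'b) \<Rightarrow> nat \<Rightarrow> 'b list" where
  "zimin e c 0 = []"
| "zimin e c (Suc l) = list_pow (zimin e c l @ [c l]) e @ zimin e c l"

lemma zimin_cong: "(\<And>l. l < m \<Longrightarrow> c l = c' l) \<Longrightarrow> zimin e c m = zimin e c' m"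
  by (induction m) auto

lemma map_zimin: "map f (zimin e c m) = zimin e (f \<circ> c) m"
  by (induction m) (auto simp: map_list_pow)

lemma set_zimin_subset: "set (zimin e c m) \<subseteq> c ` {..<m}"
  by (induction m) (use set_list_pow_subset in fastforce)+

lemma mem_set_zimin: "0 < e \<Longrightarrow> l < m \<Longrightarrow> c l \<in> set (zimin e c m)"
proof (induction m)
  case (Suc m)
  then obtain e' where "e = Suc e'"
    by (cases e) auto
  with Suc show ?case
    by (cases "l = m") (auto simp: list_pow_Suc)
qed simp

lemma ctx_equiv_zimin_absorb:
  assumes "d < e" and "l < j"
  shows "ctx_equiv q d (zimin e c j @ [c l] @ zimin e c j) (zimin e c j)"
  using assms(2)
proof (induction j)
  case (Suc j)
  define Z where "Z = zimin e c j"
  define U where "U = Z @ [c j]"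
  obtain e' where e: "e = Suc e'"
    using assms(1) by (cases e) auto
  have U: "U \<noteq> []" and Z: "zimin e c (Suc j) = list_pow U e @ Z"
    by (simp_all add: U_def Z_def)
  have pump: "ctx_equiv q d (list_pow U k @ Z) (list_pow U e @ Z)" if "e \<le> k" for k
    by (intro ctx_equiv_append ctx_equiv_list_pow[OF U] ctx_equiv_refl) (use that assms(1) in auto)
  show ?case
  proof (cases "l = j")
    case True
    have "zimin e c (Suc j) @ [c l] @ zimin e c (Suc j) = list_pow U e @ U @ list_pow U e @ Z"
      by (simp add: Z_def U_def True)
    also have "\<dots> = list_pow U (e + Suc e) @ Z"
      by (simp only: list_pow_add list_pow_Suc append_assoc)
    also have "ctx_equiv q d \<dots> (list_pow U e @ Z)"
      by (rule pump) simp
    also have "\<dots> = zimin e c (Suc j)"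
      by (simp only: Z)
    finally show ?thesis .
  next
    case False
    then have IH: "ctx_equiv q d (Z @ [c l] @ Z) Z"
      using Suc by (simp add: Z_def)
    have "zimin e c (Suc j) @ [c l] @ zimin e c (Suc j) =
        list_pow U e @ (Z @ [c l] @ Z) @ [c j] @ list_pow U e' @ Z"
      unfolding Z by (simp only: e list_pow_Suc U_def append_assoc append_Cons append_Nil)
    also have "ctx_equiv q d \<dots> (list_pow U e @ Z @ [c j] @ list_pow U e' @ Z)"
      by (intro ctx_equiv_append ctx_equiv_refl IH)
    also have "\<dots> = list_pow U (e + e) @ Z"
      by (simp only: e list_pow_add list_pow_Suc U_def append_assoc append_Cons append_Nil)
    also have "ctx_equiv q d \<dots> (list_pow U e @ Z)"
      by (rule pump) simp
    also have "\<dots> = zimin e c (Suc j)"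
      by (simp only: Z)
    finally show ?thesis .
  qed
qed simp

lemma ctx_equiv_zimin_absorb_pow:
  assumes "d < e" and "l < j"
  shows "ctx_equiv q d (list_pow (zimin e c j @ [c l]) n @ zimin e c j) (zimin e c j)"
proof (induction n)
  case (Suc n)
  have "ctx_equiv q d ((zimin e c j @ [c l]) @ (list_pow (zimin e c j @ [c l]) n @ zimin e c j))
      ((zimin e c j @ [c l]) @ zimin e c j)"
    by (rule ctx_equiv_append[OF ctx_equiv_refl Suc])
  then show ?case
    using ctx_equiv_zimin_absorb[OF assms, of q c] by (auto simp: list_pow_Suc intro: ctx_equiv_trans)
qed (simp add: ctx_equiv_refl)

lemma ctx_equiv_zimin_delete:
  assumes "d < e" and "l < i" and "c l = c i"
    and skip: "\<And>k. c' k = c (if k < i then k else Suc k)"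
  shows "i \<le> m \<Longrightarrow> ctx_equiv q d (zimin e c (Suc m)) (zimin e c' m)"
proof (induction m)
  case (Suc m)
  show ?case
  proof (cases "i = Suc m")
    case True
    have "zimin e c' (Suc m) = zimin e c (Suc m)"
      by (rule zimin_cong) (simp add: skip True)
    then show ?thesis
      using ctx_equiv_zimin_absorb_pow[OF assms(1), where l = l and j = "Suc m" and c = c and q = q and n = e] assms(2,3) True by simp
  next
    case False
    then have IH: "ctx_equiv q d (zimin e c (Suc m)) (zimin e c' m)"
      using Suc by simp
    have c'_m: "c' m = c (Suc m)"
      using False Suc.prems skip by simp
    show ?thesis
      unfolding zimin.simps(2)[of e c "Suc m"] zimin.simps(2)[of e c' m] c'_m
      by (intro ctx_equiv_append ctx_equiv_list_pow_cong IH ctx_equiv_refl)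
  qed
qed (use assms(2) in simp)

section \<open>Teams of marker traces\<close>

definition marker_trace :: "'a \<Rightarrow> ('i \<Rightarrow> nat \<Rightarrow> bool) \<Rightarrow> 'i \<Rightarrow> 'a trace" where
  "marker_trace q fires i = (\<lambda>k. if fires i k then {} else {q})"

text \<open>
  Unassigned variables are put into every letter, matching the fact that \<open>HProp p \<pi>\<close> is false
  for an unassigned \<open>\<pi>\<close>.
\<close>

definition firing_word :: "tvar set \<Rightarrow> ('i \<Rightarrow> nat \<Rightarrow> bool) \<Rightarrow> (tvar \<Rightarrow> 'i option) \<Rightarrow> word" where
  "firing_word V fires \<rho> = (\<lambda>k. {\<pi> \<in> V. case \<rho> \<pi> of None \<Rightarrow> True | Some i \<Rightarrow> fires i k})"

lemma suffix_marker_trace: "suffix k (marker_trace q fires i) = marker_trace q (\<lambda>i j. fires i (j + k)) i"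
  by (simp add: marker_trace_def fun_eq_iff suffix_apply)

lemma ashift_marker_trace:
  "ashift k (map_option (marker_trace q fires) \<circ> \<rho>) = map_option (marker_trace q (\<lambda>i j. fires i (j + k))) \<circ> \<rho>"
  by (simp add: ashift_def fun_eq_iff option.map_comp comp_def suffix_marker_trace)

lemma suffix_firing_word:
  "suffix k (firing_word V fires \<rho>) = firing_word V (\<lambda>i j. fires i (j + k)) \<rho>"
  by (simp add: firing_word_def fun_eq_iff suffix_apply)

lemma hbsat_marker_trace:
  "hbfree b \<subseteq> V \<Longrightarrow> hbsat (map_option (marker_trace q fires) \<circ> \<rho>) b \<longleftrightarrow> wsat q (firing_word V fires \<rho>) b"
proof (induction b arbitrary: fires)
  case (HProp p \<pi>)
  then show ?case
    by (cases "\<rho> \<pi>") (auto simp: firing_word_def marker_trace_def)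
qed (simp_all add: ashift_marker_trace suffix_firing_word)

fun matrix :: "'a hyper \<Rightarrow> 'a hbody" where
  "matrix (HEx \<pi> f) = matrix f"
| "matrix (HAll \<pi> f) = matrix f"
| "matrix (HBody b) = b"

lemma finite_hbfree: "finite (hbfree b)"
  by (induction b) auto

lemma hsat_HEx_image:
  "hsat (t ` I) (map_option t \<circ> \<rho>) (HEx \<pi> f) \<longleftrightarrow> (\<exists>i\<in>I. hsat (t ` I) (map_option t \<circ> \<rho>(\<pi> := Some i)) f)"
  by (simp add: fun_upd_comp)

lemma hsat_HAll_image:
  "hsat (t ` I) (map_option t \<circ> \<rho>) (HAll \<pi> f) \<longleftrightarrow> (\<forall>i\<in>I. hsat (t ` I) (map_option t \<circ> \<rho>(\<pi> := Some i)) f)"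
  by (simp add: fun_upd_comp)

lemma hsat_indexed_teams_cong:
  fixes t t' :: "'i \<Rightarrow> 'a trace"
  assumes "\<And>\<rho>. ran \<rho> \<subseteq> I \<Longrightarrow>
      hbsat (map_option t \<circ> \<rho>) (matrix f) \<longleftrightarrow> hbsat (map_option t' \<circ> \<rho>) (matrix f)"
    and "ran \<rho> \<subseteq> I"
  shows "hsat (t ` I) (map_option t \<circ> \<rho>) f \<longleftrightarrow> hsat (t' ` I) (map_option t' \<circ> \<rho>) f"
  using assms
proof (induction f arbitrary: \<rho>)
  case (HEx \<pi> f)
  have "hsat (t ` I) (map_option t \<circ> \<rho>(\<pi> := Some i)) f \<longleftrightarrow> hsat (t' ` I) (map_option t' \<circ> \<rho>(\<pi> := Some i)) f"
    if "i \<in> I" for i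
    using HEx that by (intro HEx.IH) (auto simp: ran_def)
  then show ?case
    unfolding hsat_HEx_image by blast
next
  case (HAll \<pi> f)
  have "hsat (t ` I) (map_option t \<circ> \<rho>(\<pi> := Some i)) f \<longleftrightarrow> hsat (t' ` I) (map_option t' \<circ> \<rho>(\<pi> := Some i)) f"
    if "i \<in> I" for i
    using HAll that by (intro HAll.IH) (auto simp: ran_def)
  then show ?case
    unfolding hsat_HAll_image by blast
qed simp

section \<open>Two teams that no sentence separates\<close>

text \<open>
  Time is cut into block \<open>0\<close>, spelt by \<open>W0\<close>, followed by blocks \<open>1, 2, \<dots>\<close>, each spelt by
  \<open>W\<close>; the trace indexed by \<open>(l, c)\<close> fires at the positions of block \<open>c\<close> that spell \<open>l\<close>.
\<close>

definition block_fires :: "nat list \<Rightarrow> nat list \<Rightarrow> nat \<times> nat \<Rightarrow> nat \<Rightarrow> bool" where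
  "block_fires W0 W i k \<longleftrightarrow>
     (if k < length W0 then i = (W0 ! k, 0)
      else i = (W ! ((k - length W0) mod length W), Suc ((k - length W0) div length W)))"

lemma block_fires_prefix: "k < length W0 \<Longrightarrow> block_fires W0 W i k \<longleftrightarrow> i = (W0 ! k, 0)"
  by (simp add: block_fires_def)

lemma block_fires_shift:
  "block_fires W0 W i (k + length W0) \<longleftrightarrow> i = (W ! (k mod length W), Suc (k div length W))"
  by (simp add: block_fires_def)

lemma block_fires_self:
  assumes "W \<noteq> []"
  shows "block_fires W W (W ! (k mod length W), k div length W) k"
proof (cases "k < length W")
  case False
  then have "k mod length W = (k - length W) mod length W" and "k div length W = Suc ((k - length W) div length W)"
    using assms by (simp_all add: le_mod_geq le_div_geq)
  with False show ?thesis
    by (simp add: block_fires_def)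
qed (simp add: block_fires_def)

definition zimin_block :: "nat \<Rightarrow> nat \<Rightarrow> nat list" where
  "zimin_block e L = zimin e id L @ [L]"

lemma set_zimin_block: "set (zimin_block e L) \<subseteq> {..L}"
  using set_zimin_subset[of e id L] by (auto simp: zimin_block_def)

definition full_index :: "nat \<Rightarrow> (nat \<times> nat) set" where
  "full_index L = {(l, c). l \<le> L}"

definition punctured_index :: "nat \<Rightarrow> nat \<Rightarrow> (nat \<times> nat) set" where
  "punctured_index L gap = {(l, c). l \<le> L \<or> (c = 0 \<and> l = Suc L)} - {(gap, 0)}"

fun close_gap :: "nat \<Rightarrow> nat \<times> nat \<Rightarrow> nat \<times> nat" where
  "close_gap gap (l, c) = (if c = 0 \<and> gap < l then (l - 1, c) else (l, c))"

lemma close_gap_punctured_index: "gap \<le> L \<Longrightarrow> close_gap gap ` punctured_index L gap = full_index L"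
proof
  assume "gap \<le> L"
  then show "close_gap gap ` punctured_index L gap \<subseteq> full_index L"
    by (auto simp: punctured_index_def full_index_def split: if_split_asm)
  show "full_index L \<subseteq> close_gap gap ` punctured_index L gap"
  proof clarify
    fix l c
    assume "(l, c) \<in> full_index L"
    then have "(l, c) = close_gap gap (if c = 0 \<and> gap \<le> l then Suc l else l, c)"
      and "(if c = 0 \<and> gap \<le> l then Suc l else l, c) \<in> punctured_index L gap"
      using \<open>gap \<le> L\<close> by (auto simp: punctured_index_def full_index_def)
    then show "(l, c) \<in> close_gap gap ` punctured_index L gap"
      by blast
  qed
qed

definition block0_letter :: "tvar set \<Rightarrow> (tvar \<Rightarrow> (nat \<times> nat) option) \<Rightarrow> nat \<Rightarrow> tvar set" where
  "block0_letter V \<rho> l = {\<pi> \<in> V. \<rho> \<pi> = None \<or> \<rho> \<pi> = Some (l, 0)}"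

lemma firing_word_block_fires_prefix:
  assumes "k < length W0"
  shows "firing_word V (block_fires W0 W) \<rho> k = block0_letter V \<rho> (W0 ! k)"
proof -
  have "(case \<rho> \<pi> of None \<Rightarrow> True | Some i \<Rightarrow> block_fires W0 W i k) \<longleftrightarrow> \<rho> \<pi> = None \<or> \<rho> \<pi> = Some (W0 ! k, 0)"
    for \<pi>
    using assms by (cases "\<rho> \<pi>") (simp_all add: block_fires_prefix)
  then show ?thesis
    by (simp add: firing_word_def block0_letter_def)
qed

lemma firing_word_block_fires:
  "firing_word V (block_fires W0 W) \<rho> =
     conc (map (block0_letter V \<rho>) W0) (suffix (length W0) (firing_word V (block_fires W0 W) \<rho>))"
proof -
  have "map (firing_word V (block_fires W0 W) \<rho>) [0..<length W0] = map (block0_letter V \<rho> \<circ> (!) W0) [0..<length W0]"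
    by (rule map_cong) (simp_all add: firing_word_block_fires_prefix)
  also have "\<dots> = map (block0_letter V \<rho>) W0"
    by (metis map_map map_nth)
  finally show ?thesis
    using conc_map_suffix by metis
qed

lemma block0_letter_close_gap:
  assumes "ran \<rho> \<subseteq> punctured_index L gap"
  shows "block0_letter V (map_option (close_gap gap) \<circ> \<rho>) l = block0_letter V \<rho> (if l < gap then l else Suc l)"
proof -
  have "map_option (close_gap gap) (\<rho> \<pi>) = Some (l, 0) \<longleftrightarrow> \<rho> \<pi> = Some (if l < gap then l else Suc l, 0)" for \<pi>
    using assms ranI[of \<rho> \<pi>] by (cases "\<rho> \<pi>") (auto simp: punctured_index_def split: if_split_asm)
  then show ?thesis
    by (auto simp: block0_letter_def)
qed

lemma exists_less_notin_image:
  assumes "finite V" and "card V < n"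
  shows "\<exists>l<n. l \<notin> g ` V"
proof (rule ccontr)
  assume "\<not> ?thesis"
  then have "card {..<n} \<le> card (g ` V)"
    using assms(1) by (intro card_mono) auto
  also have "\<dots> \<le> card V"
    using assms(1) by (rule card_image_le)
  finally show False
    using assms(2) by simp
qed

lemma block0_letter_repeats:
  assumes "finite V" and "card V < gap" and "(gap, 0) \<notin> ran \<rho>"
  shows "\<exists>l<gap. block0_letter V \<rho> l = block0_letter V \<rho> gap"
proof -
  obtain l where "l < gap" and unused: "l \<notin> (\<lambda>\<pi>. fst (the (\<rho> \<pi>))) ` V"
    using exists_less_notin_image[OF assms(1,2)] by blast
  have "\<rho> \<pi> \<noteq> Some (l, 0)" if "\<pi> \<in> V" for \<pi>
    using unused that by force
  with \<open>l < gap\<close> assms(3) show ?thesis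
    by (auto simp: block0_letter_def ranI)
qed

lemma close_gap_eq_Suc: "close_gap gap i = (l, Suc n) \<longleftrightarrow> i = (l, Suc n)"
  by (cases i) auto

lemma suffix_firing_word_block_fires_close_gap:
  "suffix (length W0) (firing_word V (block_fires W0 W) \<rho>) =
     suffix (length W) (firing_word V (block_fires W W) (map_option (close_gap gap) \<circ> \<rho>))"
proof -
  have "(case \<rho> \<pi> of None \<Rightarrow> True | Some i \<Rightarrow> block_fires W0 W i (k + length W0)) \<longleftrightarrow>
      (case map_option (close_gap gap) (\<rho> \<pi>) of None \<Rightarrow> True | Some i \<Rightarrow> block_fires W W i (k + length W))"
    for \<pi> k
    by (cases "\<rho> \<pi>") (simp_all add: block_fires_shift close_gap_eq_Suc)
  then show ?thesis
    unfolding suffix_firing_word by (simp only: firing_word_def comp_def)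
qed

lemma firing_words_depth_equiv:
  assumes "d < e" and "gap \<le> L" and "finite V" and "card V < gap" and \<rho>: "ran \<rho> \<subseteq> punctured_index L gap"
  shows "depth_equiv q d (firing_word V (block_fires (zimin_block e (Suc L)) (zimin_block e L)) \<rho>)
           (firing_word V (block_fires (zimin_block e L) (zimin_block e L)) (map_option (close_gap gap) \<circ> \<rho>))"
proof -
  define c where "c = block0_letter V \<rho>"
  define c' where "c' = block0_letter V (map_option (close_gap gap) \<circ> \<rho>)"
  define rest where "rest = suffix (length (zimin_block e (Suc L)))
    (firing_word V (block_fires (zimin_block e (Suc L)) (zimin_block e L)) \<rho>)"
  have "(gap, 0) \<notin> ran \<rho>"
    using \<rho> by (auto simp: punctured_index_def)
  then obtain l where "l < gap" and "c l = c gap"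
    using block0_letter_repeats[OF assms(3,4)] by (auto simp: c_def)
  moreover have skip: "c' k = c (if k < gap then k else Suc k)" for k
    using block0_letter_close_gap[OF \<rho>] by (simp add: c_def c'_def)
  ultimately have zimin_equiv: "ctx_equiv q d (zimin e c (Suc L)) (zimin e c' L)"
    using ctx_equiv_zimin_delete[OF assms(1)] assms(2) by (metis (no_types, lifting))
  have "c' L = c (Suc L)"
    using skip assms(2) by simp
  then have "ctx_equiv q d (zimin e c (Suc L) @ [c (Suc L)]) (zimin e c' L @ [c' L])"
    using ctx_equiv_append[OF zimin_equiv ctx_equiv_refl] by simp
  then have blocks: "ctx_equiv q d (map c (zimin_block e (Suc L))) (map c' (zimin_block e L))"
    by (simp only: zimin_block_def map_append map_zimin comp_id list.map)
  have punctured_word: "firing_word V (block_fires (zimin_block e (Suc L)) (zimin_block e L)) \<rho> =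
      conc (map c (zimin_block e (Suc L))) rest"
    unfolding c_def rest_def by (rule firing_word_block_fires)
  have "rest = suffix (length (zimin_block e L))
      (firing_word V (block_fires (zimin_block e L) (zimin_block e L)) (map_option (close_gap gap) \<circ> \<rho>))"
    unfolding rest_def by (rule suffix_firing_word_block_fires_close_gap)
  then have full_word: "firing_word V (block_fires (zimin_block e L) (zimin_block e L)) (map_option (close_gap gap) \<circ> \<rho>) =
      conc (map c' (zimin_block e L)) rest"
    unfolding c'_def by (simp only: firing_word_block_fires[symmetric])
  show ?thesis
    using blocks unfolding punctured_word full_word ctx_equiv_def by blast
qed

lemma sat_s_Fin_punctured_team:
  assumes "0 < e" and "gap \<le> L"
  shows "sat_s (marker_trace q (block_fires (zimin_block e (Suc L)) W) ` punctured_index L gap) (Fin (Prop q))"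
proof -
  have "gap \<in> set (zimin_block e (Suc L))"
    using mem_set_zimin[OF assms(1), of gap "Suc L" id] assms(2) by (simp add: zimin_block_def)
  then obtain k where k: "k < length (zimin_block e (Suc L))" "zimin_block e (Suc L) ! k = gap"
    by (auto simp: in_set_conv_nth)
  have "q \<in> marker_trace q (block_fires (zimin_block e (Suc L)) W) i k" if "i \<in> punctured_index L gap" for i
    using k that by (auto simp: marker_trace_def block_fires_prefix punctured_index_def)
  then show ?thesis
    by (auto simp: tshift_def suffix_apply intro!: exI[of _ k])
qed

lemma not_sat_s_Fin_full_team:
  "\<not> sat_s (marker_trace q (block_fires (zimin_block e L) (zimin_block e L)) ` full_index L) (Fin (Prop q))"
proof
  define W where "W = zimin_block e L"
  assume "sat_s (marker_trace q (block_fires (zimin_block e L) (zimin_block e L)) ` full_index L) (Fin (Prop q))"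
  then obtain k where k: "\<forall>i\<in>full_index L. q \<in> marker_trace q (block_fires W W) i k"
    by (auto simp: tshift_def suffix_apply W_def)
  have "W \<noteq> []"
    by (simp add: W_def zimin_block_def)
  then have "block_fires W W (W ! (k mod length W), k div length W) k"
    by (rule block_fires_self)
  moreover have "W ! (k mod length W) \<in> set W"
    using \<open>W \<noteq> []\<close> by simp
  with set_zimin_block[of e L] have "(W ! (k mod length W), k div length W) \<in> full_index L"
    by (auto simp: W_def full_index_def)
  ultimately show False
    using k by (auto simp: marker_trace_def)
qed

lemma map_option_comp_empty: "map_option g \<circ> Map.empty = Map.empty"
  by (simp add: fun_eq_iff)

lemma hmodels_punctured_team_iff_full_team:
  fixes f :: "'a hyper" and q :: 'a
  assumes "temporal_depth (matrix f) < e" and "card (hbfree (matrix f)) < gap" and "gap \<le> L"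
  shows "hmodels (marker_trace q (block_fires (zimin_block e (Suc L)) (zimin_block e L)) ` punctured_index L gap) f \<longleftrightarrow>
    hmodels (marker_trace q (block_fires (zimin_block e L) (zimin_block e L)) ` full_index L) f"
proof -
  define t where "t = marker_trace q (block_fires (zimin_block e (Suc L)) (zimin_block e L))"
  define t\<^sub>0 where "t\<^sub>0 = marker_trace q (block_fires (zimin_block e L) (zimin_block e L))"
  have team: "(t\<^sub>0 \<circ> close_gap gap) ` punctured_index L gap = t\<^sub>0 ` full_index L"
    by (simp only: image_comp[symmetric] close_gap_punctured_index[OF assms(3)])
  have "hbsat (map_option t \<circ> \<rho>) (matrix f) \<longleftrightarrow> hbsat (map_option (t\<^sub>0 \<circ> close_gap gap) \<circ> \<rho>) (matrix f)"
    if "ran \<rho> \<subseteq> punctured_index L gap" for \<rho>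
  proof -
    let ?V = "hbfree (matrix f)"
    have "hbsat (map_option t \<circ> \<rho>) (matrix f) \<longleftrightarrow>
        wsat q (firing_word ?V (block_fires (zimin_block e (Suc L)) (zimin_block e L)) \<rho>) (matrix f)"
      unfolding t_def by (rule hbsat_marker_trace) simp
    also have "\<dots> \<longleftrightarrow> wsat q (firing_word ?V (block_fires (zimin_block e L) (zimin_block e L))
        (map_option (close_gap gap) \<circ> \<rho>)) (matrix f)"
      by (rule firing_words_depth_equiv[OF assms(1,3) finite_hbfree assms(2) that,
            unfolded depth_equiv_def, rule_format, OF order_refl])
    also have "\<dots> \<longleftrightarrow> hbsat (map_option t\<^sub>0 \<circ> (map_option (close_gap gap) \<circ> \<rho>)) (matrix f)"
      unfolding t\<^sub>0_def by (rule hbsat_marker_trace[symmetric]) simp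
    also have "map_option t\<^sub>0 \<circ> (map_option (close_gap gap) \<circ> \<rho>) = map_option (t\<^sub>0 \<circ> close_gap gap) \<circ> \<rho>"
      by (simp add: fun_eq_iff option.map_comp)
    finally show ?thesis .
  qed
  then have "hsat (t ` punctured_index L gap) (map_option t \<circ> Map.empty) f \<longleftrightarrow>
      hsat ((t\<^sub>0 \<circ> close_gap gap) ` punctured_index L gap) (map_option (t\<^sub>0 \<circ> close_gap gap) \<circ> Map.empty) f"
    by (intro hsat_indexed_teams_cong) auto
  then show ?thesis
    unfolding hmodels_def t_def[symmetric] t\<^sub>0_def[symmetric] team[symmetric]
    by (simp only: map_option_comp_empty)
qed

lemma Fin_Prop_not_equiv_s: "\<not> equiv_s f (Fin (Prop q))"
proof
  define e where "e = Suc (temporal_depth (matrix f))"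
  define L where "L = Suc (card (hbfree (matrix f)))"
  define T where "T = marker_trace q (block_fires (zimin_block e (Suc L)) (zimin_block e L)) ` punctured_index L L"
  define T\<^sub>0 where "T\<^sub>0 = marker_trace q (block_fires (zimin_block e L) (zimin_block e L)) ` full_index L"
  assume "equiv_s f (Fin (Prop q))"
  then have "sat_s T (Fin (Prop q)) \<longleftrightarrow> sat_s T\<^sub>0 (Fin (Prop q))"
    using hmodels_punctured_team_iff_full_team[of f e L L q] by (simp add: equiv_s_def e_def L_def T_def T\<^sub>0_def)
  moreover have "sat_s T (Fin (Prop q))"
    unfolding T_def by (rule sat_s_Fin_punctured_team) (simp_all add: e_def)
  ultimately show False
    using not_sat_s_Fin_full_team[of q e L] unfolding T\<^sub>0_def[symmetric] by blast
qed

section \<open>Flatness of the asynchronous semantics\<close>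

fun lsat :: "'a trace \<Rightarrow> 'a ltl \<Rightarrow> bool" where
  "lsat t (Prop p) \<longleftrightarrow> p \<in> t 0"
| "lsat t (NProp p) \<longleftrightarrow> p \<notin> t 0"
| "lsat t (And a b) \<longleftrightarrow> lsat t a \<and> lsat t b"
| "lsat t (Or a b) \<longleftrightarrow> lsat t a \<or> lsat t b"
| "lsat t (Next a) \<longleftrightarrow> lsat (suffix 1 t) a"
| "lsat t (Fin a) \<longleftrightarrow> (\<exists>k. lsat (suffix k t) a)"
| "lsat t (Glob a) \<longleftrightarrow> (\<forall>k. lsat (suffix k t) a)"
| "lsat t (Until a b) \<longleftrightarrow> (\<exists>k. lsat (suffix k t) b \<and> (\<forall>j<k. lsat (suffix j t) a))"
| "lsat t (Release a b) \<longleftrightarrow> (\<forall>k. lsat (suffix k t) b \<or> (\<exists>j<k. lsat (suffix j t) a))"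

lemma ball_tshiftf: "(\<forall>s\<in>tshiftf k T. P s) \<longleftrightarrow> (\<forall>t\<in>T. P (suffix (k t) t))"
  by (simp add: tshiftf_def)

context
  fixes a :: "'a ltl"
  assumes flat_a: "\<And>T. sat_a T a \<longleftrightarrow> (\<forall>t\<in>T. lsat t a)"
begin

lemma sat_a_Fin_flat: "sat_a T (Fin a) \<longleftrightarrow> (\<forall>t\<in>T. lsat t (Fin a))"
  by (auto simp: flat_a ball_tshiftf dest!: bchoice)

lemma sat_a_Glob_flat: "sat_a T (Glob a) \<longleftrightarrow> (\<forall>t\<in>T. lsat t (Glob a))"
proof
  assume "sat_a T (Glob a)"
  then have "sat_a (tshiftf (\<lambda>_. n) T) a" for n
    by simp
  then show "\<forall>t\<in>T. lsat t (Glob a)"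
    by (simp add: flat_a ball_tshiftf)
qed (simp add: flat_a ball_tshiftf)

context
  fixes b :: "'a ltl"
  assumes flat_b: "\<And>T. sat_a T b \<longleftrightarrow> (\<forall>t\<in>T. lsat t b)"
begin

lemma sat_a_Or_flat: "sat_a T (Or a b) \<longleftrightarrow> (\<forall>t\<in>T. lsat t (Or a b))"
proof
  assume "\<forall>t\<in>T. lsat t (Or a b)"
  then have "T = {t \<in> T. lsat t a} \<union> {t \<in> T. lsat t b}"
    by auto
  then show "sat_a T (Or a b)"
    using flat_a flat_b by (simp only: sat_a.simps) blast
qed (auto simp: flat_a flat_b)

lemma sat_a_Until_flat: "sat_a T (Until a b) \<longleftrightarrow> (\<forall>t\<in>T. lsat t (Until a b))"
proof
  assume "sat_a T (Until a b)"
  then obtain k where b: "\<forall>t\<in>T. lsat (suffix (k t) t) b"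
    and a: "\<And>k'. \<forall>t\<in>{t \<in> T. 0 < k t}. k' t < k t \<Longrightarrow> \<forall>t\<in>{t \<in> T. 0 < k t}. lsat (suffix (k' t) t) a"
    by (auto simp: flat_a flat_b ball_tshiftf)
  have "lsat (suffix j t) a" if "t \<in> T" and "j < k t" for t j
  proof -
    have "\<forall>s\<in>{t \<in> T. 0 < k t}. (if s = t then j else 0) < k s"
      using that by auto
    from a[OF this] show ?thesis
      using that by auto
  qed
  with b show "\<forall>t\<in>T. lsat t (Until a b)"
    by auto
next
  assume "\<forall>t\<in>T. lsat t (Until a b)"
  then obtain k where "\<forall>t\<in>T. lsat (suffix (k t) t) b \<and> (\<forall>j<k t. lsat (suffix j t) a)"
    by (auto dest!: bchoice)
  then show "sat_a T (Until a b)"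
    by (auto simp: flat_a flat_b ball_tshiftf)
qed

lemma sat_a_Release_flat: "sat_a T (Release a b) \<longleftrightarrow> (\<forall>t\<in>T. lsat t (Release a b))"
proof
  assume H: "sat_a T (Release a b)"
  show "\<forall>t\<in>T. lsat t (Release a b)"
  proof (intro ballI, simp only: lsat.simps, intro allI)
    fix t n
    assume "t \<in> T"
    obtain T1 T2 k' where "T1 \<union> T2 = T" "sat_a (tshiftf (\<lambda>_. n) T1) b"
      "\<forall>t\<in>T2. k' t < n" "sat_a (tshiftf k' T2) a"
      using H[unfolded sat_a.simps, rule_format, of "\<lambda>_. n"] by blast
    with \<open>t \<in> T\<close> show "lsat (suffix n t) b \<or> (\<exists>j<n. lsat (suffix j t) a)"
      by (auto simp: flat_a flat_b ball_tshiftf)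
  qed
next
  assume H: "\<forall>t\<in>T. lsat t (Release a b)"
  show "sat_a T (Release a b)"
  proof (simp only: sat_a.simps, intro allI)
    fix k :: "'a trace \<Rightarrow> nat"
    define T1 where "T1 = {t \<in> T. lsat (suffix (k t) t) b}"
    have "\<forall>t\<in>T - T1. \<exists>j<k t. lsat (suffix j t) a"
      using H by (auto simp: T1_def)
    then obtain k' where "\<forall>t\<in>T - T1. k' t < k t \<and> lsat (suffix (k' t) t) a"
      by (auto dest!: bchoice)
    then show "\<exists>T1 T2. T1 \<union> T2 = T \<and> sat_a (tshiftf k T1) b \<and>
        (\<exists>k'. (\<forall>t\<in>T2. k' t < k t) \<and> sat_a (tshiftf k' T2) a)"
      by (intro exI[of _ T1] exI[of _ "T - T1"] exI[of _ k'])
        (auto simp: T1_def flat_a flat_b ball_tshiftf)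
  qed
qed

end

end

lemma sat_a_iff_lsat: "sat_a T g \<longleftrightarrow> (\<forall>t\<in>T. lsat t g)"
proof (induction g arbitrary: T)
  case (Or a b)
  then show ?case by (rule sat_a_Or_flat)
next
  case (Fin a)
  then show ?case by (rule sat_a_Fin_flat)
next
  case (Glob a)
  then show ?case by (rule sat_a_Glob_flat)
next
  case (Until a b)
  then show ?case by (rule sat_a_Until_flat)
next
  case (Release a b)
  then show ?case by (rule sat_a_Release_flat)
qed (auto simp: tshift_def)

definition htrue :: "'a hbody" where
  "htrue = HOr (HProp undefined 0) (HNot (HProp undefined 0))"

lemma hbsat_htrue [simp]: "hbsat \<Pi> htrue"
  by (simp add: htrue_def)

fun ltl_to_hbody :: "'a ltl \<Rightarrow> 'a hbody" where
  "ltl_to_hbody (Prop p) = HProp p 0"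
| "ltl_to_hbody (NProp p) = HNot (HProp p 0)"
| "ltl_to_hbody (And a b) = HNot (HOr (HNot (ltl_to_hbody a)) (HNot (ltl_to_hbody b)))"
| "ltl_to_hbody (Or a b) = HOr (ltl_to_hbody a) (ltl_to_hbody b)"
| "ltl_to_hbody (Next a) = HNext (ltl_to_hbody a)"
| "ltl_to_hbody (Fin a) = HUntil htrue (ltl_to_hbody a)"
| "ltl_to_hbody (Glob a) = HNot (HUntil htrue (HNot (ltl_to_hbody a)))"
| "ltl_to_hbody (Until a b) = HUntil (ltl_to_hbody a) (ltl_to_hbody b)"
| "ltl_to_hbody (Release a b) = HNot (HUntil (HNot (ltl_to_hbody a)) (HNot (ltl_to_hbody b)))"

lemma hbfree_ltl_to_hbody: "hbfree (ltl_to_hbody g) \<subseteq> {0}"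
  by (induction g) (auto simp: htrue_def)

lemma ashift_Some: "\<Pi> \<pi> = Some t \<Longrightarrow> ashift k \<Pi> \<pi> = Some (suffix k t)"
  by (simp add: ashift_def)

lemma hbsat_ltl_to_hbody: "\<Pi> 0 = Some t \<Longrightarrow> hbsat \<Pi> (ltl_to_hbody g) \<longleftrightarrow> lsat t g"
proof (induction g arbitrary: \<Pi> t)
  case (Next g)
  then show ?case using ashift_Some[of \<Pi> 0 t, OF Next.prems] by simp
next
  case (Fin g)
  then show ?case using ashift_Some[of \<Pi> 0 t, OF Fin.prems] by simp
next
  case (Glob g)
  then show ?case using ashift_Some[of \<Pi> 0 t, OF Glob.prems] by simp
next
  case (Until g1 g2)
  then show ?case using ashift_Some[of \<Pi> 0 t, OF Until.prems] by simp
next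
  case (Release g1 g2)
  then show ?case using ashift_Some[of \<Pi> 0 t, OF Release.prems] by simp
qed simp_all

lemma sentence_universal_ltl_to_hbody: "sentence (HAll 0 (HBody (ltl_to_hbody g)))"
  using hbfree_ltl_to_hbody[of g] by (auto simp: sentence_def)

lemma equiv_a_universal_ltl_to_hbody: "equiv_a (HAll 0 (HBody (ltl_to_hbody g))) g"
  by (simp add: equiv_a_def hmodels_def sat_a_iff_lsat hbsat_ltl_to_hbody)

lemma sat_s_empty: "sat_s {} g"
  by (induction g) (auto simp: tshift_def)

lemma sat_a_empty: "sat_a {} g"
  by (induction g) (auto simp: tshift_def tshiftf_def)

lemma not_hmodels_empty_HEx: "\<not> hmodels {} (HEx \<pi> f)"
  by (simp add: hmodels_def)

theorem mainTheorem16: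
  shows "(\<exists>f :: ('a::finite) hyper. sentence f \<and> (\<forall>g. \<not> equiv_s f g)) \<and>
         (\<exists>g :: 'a ltl. \<forall>f. sentence f \<longrightarrow> \<not> equiv_s f g) \<and>
         (\<forall>g :: 'a ltl. \<exists>f. sentence f \<and> equiv_a f g) \<and>
         (\<exists>f :: 'a hyper. sentence f \<and> (\<forall>g. \<not> equiv_a f g))"
proof (intro conjI)
  \<comment> \<open>Both LTL semantics hold on the empty team, this sentence does not.\<close>
  let ?f = "HEx 0 (HBody (HProp undefined 0)) :: 'a hyper"
  have "sentence ?f"
    by (simp add: sentence_def)
  moreover have "\<not> equiv_s ?f g" and "\<not> equiv_a ?f g" for g
    using sat_s_empty sat_a_empty not_hmodels_empty_HEx
    by (auto simp: equiv_s_def equiv_a_def intro!: exI[of _ "{}"])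
  ultimately show "\<exists>f :: 'a hyper. sentence f \<and> (\<forall>g. \<not> equiv_s f g)"
    and "\<exists>f :: 'a hyper. sentence f \<and> (\<forall>g. \<not> equiv_a f g)"
    by blast+
  show "\<exists>g :: 'a ltl. \<forall>f. sentence f \<longrightarrow> \<not> equiv_s f g"
    by (rule exI[of _ "Fin (Prop undefined)"]) (simp add: Fin_Prop_not_equiv_s)
  show "\<forall>g :: 'a ltl. \<exists>f. sentence f \<and> equiv_a f g"
    using sentence_universal_ltl_to_hbody equiv_a_universal_ltl_to_hbody by blast
qed

end
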